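(* Let $a\geq 1$ and $b\geq 2$ be integers. Let $x\in\Lambda^{a+b}$ have coordinates that are linearly independent over $\mathbb{Q}$, and suppose that $T_{a,b}^k(x)\not\to(0,\ldots,0)$ as $k\to\infty$. Then there exists $k\geq 1$ such that $T_{a,b}^k(x)\in A$.
   Context: For $n\geq 1$ let $\Lambda^n=\{x\in\mathbb{R}^n : 0\leq x_1\leq\cdots\leq x_n\}$. For integers $a,b\geq 1$ the map $T_{a,b}:\Lambda^{a+b}\to\Lambda^{a+b}$ sends $x$ to the vector obtained by arranging $x_1,\ldots,x_a,\,x_{a+1}-x_a,\ldots,x_{a+b}-x_a$ in nondecreasing order. $A=\{x\in\Lambda^{a+b}: x_1+\cdots+x_{a+b}\leq b\,x_{a+b}\}$. *)

theory Defs
  imports "HOL-Analysis.Analysis"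
begin

text \<open>Vectors in R^n are represented as real lists of length n; entry (i+1) of the
paper is index i of the list.\<close>

definition Lambda :: "nat \<Rightarrow> real list set" where
  "Lambda n = {x. length x = n \<and> (\<forall>i<n. 0 \<le> x ! i) \<and> sorted x}"

definition T :: "nat \<Rightarrow> nat \<Rightarrow> real list \<Rightarrow> real list" where
  "T a b x = sort (take a x @ map (\<lambda>y. y - x ! (a - 1)) (take b (drop a x)))"

definition A_set :: "nat \<Rightarrow> nat \<Rightarrow> real list set" where
  "A_set a b = {x. x \<in> Lambda (a + b) \<and> sum_list x \<le> real b * x ! (a + b - 1)}"

definition rat_lin_indep :: "real list \<Rightarrow> bool" where
  "rat_lin_indep x \<longleftrightarrow>
     (\<forall>c :: nat \<Rightarrow> rat. (\<Sum>i<length x. of_rat (c i) * x ! i) = 0 \<longrightarrow> (\<forall>i<length x. c i = 0))"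

end

theory Submission
  imports Defs "HOL-Combinatorics.Permutations"
begin

text \<open>Subtracting one coordinate from some of the others, and permuting, preserves linear
  independence over \<open>\<rat>\<close>; hence no coordinate of a point of the orbit ever vanishes,
  and in particular the pivot \<open>x\<^sub>a\<close> (list index \<open>a - 1\<close>) stays positive. One step
  of \<open>T\<close> lowers the coordinate sum by \<open>b x\<^sub>a\<close>, so the pivots are summable and tend
  to \<open>0\<close>. The largest coordinate never increases and, since the orbit does not tend to \<open>0\<close>,
  stays above some \<open>e > 0\<close>. Outside \<open>A\<close> one has \<open>x\<^bsub>a+b\<^esub> - x\<^bsub>a+1\<^esub> < a x\<^sub>a\<close>,
  so once \<open>x\<^sub>a\<close> is small, \<open>x\<^bsub>a+1\<^esub> \<ge> 2 x\<^sub>a\<close>; then \<open>T\<close> needs no reordering and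
  keeps the pivot. Eventually the pivot is thus a positive constant tending to \<open>0\<close>, which
  is absurd.\<close>

lemma rat_lin_indepD:
  "rat_lin_indep y \<Longrightarrow> (\<Sum>i<length y. of_rat (c i) * y ! i) = 0 \<Longrightarrow> i < length y \<Longrightarrow> c i = 0"
  unfolding rat_lin_indep_def by simp

lemma rat_lin_indep_mset_eq:
  assumes "rat_lin_indep z" "mset w = mset z"
  shows "rat_lin_indep w"
  unfolding rat_lin_indep_def
proof (intro allI impI)
  fix c :: "nat \<Rightarrow> rat" and i
  assume c: "(\<Sum>i<length w. of_rat (c i) * w ! i) = 0" and i: "i < length w"
  obtain p where p: "p permutes {..<length z}" "permute_list p z = w"
    using mset_eq_permutation[OF assms(2)] by blast
  have len: "length w = length z"
    using mset_eq_length[OF assms(2)] .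
  have "(\<Sum>i<length w. of_rat (c i) * w ! i)
      = (\<Sum>i<length z. of_rat (c (inv p (p i))) * z ! p i)"
    using p permute_list_nth len permutes_inverses(2)[OF p(1)] by (intro sum.cong) auto
  also have "\<dots> = (\<Sum>j<length z. of_rat (c (inv p j)) * z ! j)"
    by (rule sum.reindex_bij_betw[OF permutes_imp_bij[OF p(1)],
          where g = "\<lambda>j. of_rat (c (inv p j)) * z ! j"])
  finally have "(\<Sum>j<length z. of_rat (c (inv p j)) * z ! j) = 0"
    using c by simp
  moreover have "p i < length z"
    using permutes_in_image[OF p(1)] i len by simp
  ultimately have "c (inv p (p i)) = 0"
    by (rule rat_lin_indepD[OF assms(1)])
  then show "c i = 0"
    using permutes_inverses(2)[OF p(1)] by simp
qed

lemma rat_lin_indep_nth_nonzero: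
  assumes "rat_lin_indep y" "i < length y"
  shows "y ! i \<noteq> 0"
proof
  assume "y ! i = 0"
  define c :: "nat \<Rightarrow> rat" where "c j = (if j = i then 1 else 0)" for j
  have "(\<Sum>j<length y. of_rat (c j) * y ! j) = (\<Sum>j<length y. if j = i then y ! j else 0)"
    by (rule sum.cong) (auto simp: c_def)
  also have "\<dots> = 0"
    using assms(2) \<open>y ! i = 0\<close> by simp
  finally have "c i = 0"
    by (rule rat_lin_indepD[OF assms(1) _ assms(2)])
  then show False
    by (simp add: c_def)
qed

lemma rat_lin_indep_subtract_nth:
  assumes indep: "rat_lin_indep y" and len: "length z = length y"
    and j: "j < length y" "j \<notin> I"
    and z: "\<And>i. i < length y \<Longrightarrow> z ! i = (if i \<in> I then y ! i - y ! j else y ! i)"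
  shows "rat_lin_indep z"
  unfolding rat_lin_indep_def
proof (intro allI impI)
  fix c :: "nat \<Rightarrow> rat" and i
  assume c: "(\<Sum>i<length z. of_rat (c i) * z ! i) = 0" and i: "i < length z"
  define n where "n = length y"
  define s where "s = (\<Sum>i\<in>I \<inter> {..<n}. c i)"
  define d where "d = c(j := c j - s)"
  have "(\<Sum>i<n. of_rat (d i) * y ! i)
      = (\<Sum>i<n. of_rat (c i) * y ! i - (if i = j then of_rat s * y ! j else 0))"
    by (rule sum.cong) (auto simp: d_def of_rat_diff algebra_simps)
  also have "\<dots> = (\<Sum>i<n. of_rat (c i) * y ! i) - of_rat s * y ! j"
    using j by (simp add: n_def sum_subtractf)
  also have "of_rat s * y ! j = (\<Sum>i<n. if i \<in> I then of_rat (c i) * y ! j else 0)"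
    by (simp add: s_def of_rat_sum sum_distrib_right sum.If_cases Int_commute)
  also have "(\<Sum>i<n. of_rat (c i) * y ! i) - \<dots> = (\<Sum>i<n. of_rat (c i) * z ! i)"
    by (simp add: flip: sum_subtractf) (rule sum.cong, auto simp: z n_def algebra_simps)
  finally have d0: "\<forall>i<n. d i = 0"
    using rat_lin_indepD[OF indep] c len unfolding n_def by simp
  then have "\<And>i. i < n \<Longrightarrow> i \<noteq> j \<Longrightarrow> c i = 0"
    by (auto simp: d_def)
  with j have "s = 0"
    unfolding s_def by (intro sum.neutral) auto
  with d0 j have "c j = 0"
    by (auto simp: d_def n_def)
  with \<open>\<And>i. i < n \<Longrightarrow> i \<noteq> j \<Longrightarrow> c i = 0\<close> i len show "c i = 0"
    by (cases "i = j") (auto simp: n_def)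
qed

definition T_unsorted :: "nat \<Rightarrow> nat \<Rightarrow> real list \<Rightarrow> real list" where
  "T_unsorted a b y = take a y @ map (\<lambda>t. t - y ! (a - 1)) (take b (drop a y))"

lemma T_eq_sort_T_unsorted: "T a b y = sort (T_unsorted a b y)"
  by (simp add: T_def T_unsorted_def)

lemma length_T_unsorted: "length y = a + b \<Longrightarrow> length (T_unsorted a b y) = a + b"
  by (simp add: T_unsorted_def)

lemma length_T: "length y = a + b \<Longrightarrow> length (T a b y) = a + b"
  by (simp add: T_eq_sort_T_unsorted length_T_unsorted)

lemma nth_T_unsorted:
  "length y = a + b \<Longrightarrow> i < a + b \<Longrightarrow>
     T_unsorted a b y ! i = (if i < a then y ! i else y ! i - y ! (a - 1))"
  by (simp add: T_unsorted_def nth_append)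

lemma set_T: "set (T a b y) = set (T_unsorted a b y)"
  by (simp add: T_eq_sort_T_unsorted)

lemma Lambda_iff: "y \<in> Lambda n \<longleftrightarrow> length y = n \<and> sorted y \<and> (\<forall>i<n. 0 \<le> y ! i)"
  by (auto simp: Lambda_def)

lemma T_unsorted_nth_bounds:
  assumes "y \<in> Lambda (a + b)" "a \<ge> 1" "i < a + b"
  shows "0 \<le> T_unsorted a b y ! i" "T_unsorted a b y ! i \<le> y ! (a + b - 1)"
proof -
  have y: "length y = a + b" "sorted y" "\<forall>i<a+b. 0 \<le> y ! i"
    using assms(1) by (auto simp: Lambda_iff)
  have "y ! (a - 1) \<le> y ! i" if "a \<le> i"
    using y that assms by (intro sorted_nth_mono) auto
  moreover have "y ! i \<le> y ! (a + b - 1)" "0 \<le> y ! i" "0 \<le> y ! (a - 1)"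
    using y assms by (auto intro: sorted_nth_mono)
  ultimately show "0 \<le> T_unsorted a b y ! i" "T_unsorted a b y ! i \<le> y ! (a + b - 1)"
    unfolding nth_T_unsorted[OF y(1) assms(3)] by auto
qed

lemma T_in_Lambda:
  assumes "y \<in> Lambda (a + b)" "a \<ge> 1"
  shows "T a b y \<in> Lambda (a + b)"
proof -
  have len: "length (T_unsorted a b y) = a + b"
    using assms(1) by (simp add: Lambda_iff length_T_unsorted)
  then have "\<forall>t\<in>set (T a b y). 0 \<le> t"
    using T_unsorted_nth_bounds(1)[OF assms] by (auto simp: set_T in_set_conv_nth)
  then have "\<forall>i<a+b. 0 \<le> T a b y ! i"
    using len length_T by (metis nth_mem length_sort T_eq_sort_T_unsorted)
  with len show ?thesis
    by (simp add: Lambda_iff T_eq_sort_T_unsorted)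
qed

lemma T_last_le:
  assumes "y \<in> Lambda (a + b)" "a \<ge> 1"
  shows "T a b y ! (a + b - 1) \<le> y ! (a + b - 1)"
proof -
  have len: "length (T a b y) = a + b" "length (T_unsorted a b y) = a + b"
    using assms(1) by (simp_all add: Lambda_iff length_T length_T_unsorted)
  with assms have "T a b y ! (a + b - 1) \<in> set (T_unsorted a b y)"
    by (metis set_T nth_mem diff_less le_add1 less_le_trans zero_less_one)
  with len T_unsorted_nth_bounds(2)[OF assms(1,2)] show ?thesis
    by (metis in_set_conv_nth)
qed

lemma sum_list_T:
  assumes "length y = a + b"
  shows "sum_list (T a b y) = sum_list y - real b * y ! (a - 1)"
proof -
  have "sum_list (T a b y) = sum_list (T_unsorted a b y)"
    by (simp add: T_eq_sort_T_unsorted flip: sum_mset_sum_list)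
  also have "\<dots> = (\<Sum>i<a+b. T_unsorted a b y ! i)"
    by (simp add: sum_list_sum_nth length_T_unsorted[OF assms] atLeast0LessThan)
  also have "\<dots> = (\<Sum>i<a+b. y ! i) - (\<Sum>i<a+b. if a \<le> i then y ! (a - 1) else 0)"
    unfolding sum_subtractf[symmetric] by (rule sum.cong) (auto simp: nth_T_unsorted[OF assms])
  also have "(\<Sum>i<a+b. if a \<le> i then y ! (a - 1) else 0) = real b * y ! (a - 1)"
  proof -
    have "{..<a+b} \<inter> {i. a \<le> i} = {a..<a+b}"
      by auto
    then show ?thesis
      by (simp add: sum.If_cases)
  qed
  finally show ?thesis
    using assms by (simp add: sum_list_sum_nth atLeast0LessThan)
qed

lemma rat_lin_indep_T:
  assumes "rat_lin_indep y" "length y = a + b" "a \<ge> 1"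
  shows "rat_lin_indep (T a b y)"
proof -
  have "rat_lin_indep (T_unsorted a b y)"
  proof (rule rat_lin_indep_subtract_nth[where j = "a - 1" and I = "{a..}"])
    show "length (T_unsorted a b y) = length y"
      using assms(2) by (simp add: length_T_unsorted)
    show "a - 1 < length y" "a - 1 \<notin> {a..}"
      using assms by auto
    show "T_unsorted a b y ! i = (if i \<in> {a..} then y ! i - y ! (a - 1) else y ! i)"
      if "i < length y" for i
      using that assms(2) by (simp add: nth_T_unsorted not_le)
  qed (fact assms(1))
  then show ?thesis
    by (rule rat_lin_indep_mset_eq) (simp add: T_eq_sort_T_unsorted)
qed

lemma T_eq_T_unsorted_if_gap:
  assumes "y \<in> Lambda (a + b)" "a \<ge> 1" "2 * y ! (a - 1) \<le> y ! a"
  shows "T a b y = T_unsorted a b y"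
proof -
  have y: "length y = a + b" "sorted y"
    using assms(1) by (auto simp: Lambda_iff)
  have "sorted (T_unsorted a b y)"
    unfolding sorted_iff_nth_mono
  proof (intro allI impI)
    fix i j
    assume ij: "i \<le> j" "j < length (T_unsorted a b y)"
    then have j: "j < a + b"
      using y(1) by (simp add: length_T_unsorted)
    have "y ! i \<le> y ! j"
      using y ij j by (intro sorted_nth_mono) auto
    moreover have "y ! a \<le> y ! j" if "a \<le> j"
      using y that j by (intro sorted_nth_mono) auto
    moreover have "y ! i \<le> y ! (a - 1)" if "i < a"
      using y that by (intro sorted_nth_mono) auto
    ultimately show "T_unsorted a b y ! i \<le> T_unsorted a b y ! j"
      using ij j assms(3) by (auto simp: nth_T_unsorted[OF y(1)])
  qed
  then show ?thesis
    by (simp add: T_eq_sort_T_unsorted sorted_sort_id)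
qed

lemma gap_lt_if_not_in_A_set:
  assumes "y \<in> Lambda (a + b)" "a \<ge> 1" "b \<ge> 1" "y \<notin> A_set a b"
  shows "y ! (a + b - 1) - y ! a < real a * y ! (a - 1)"
proof -
  have y: "length y = a + b" "sorted y"
    using assms(1) by (auto simp: Lambda_iff)
  have "sum_list y = (\<Sum>i<a. y ! i) + (\<Sum>i\<in>{a..<a+b}. y ! i)"
    using y(1) by (simp add: sum_list_sum_nth atLeast0LessThan[symmetric] sum.atLeastLessThan_concat)
  also have "(\<Sum>i\<in>{a..<a+b}. y ! i) = y ! a + (\<Sum>i\<in>{Suc a..<a+b}. y ! i)"
    using assms(3) by (subst sum.atLeast_Suc_lessThan) auto
  also have "(\<Sum>i<a. y ! i) \<le> real a * y ! (a - 1)"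
  proof -
    have "y ! i \<le> y ! (a - 1)" if "i \<in> {..<a}" for i
      using y that by (intro sorted_nth_mono) auto
    then show ?thesis
      using sum_bounded_above[of "{..<a}" "\<lambda>i. y ! i"] by simp
  qed
  also have "(\<Sum>i\<in>{Suc a..<a+b}. y ! i) \<le> real (b - 1) * y ! (a + b - 1)"
  proof -
    have "y ! i \<le> y ! (a + b - 1)" if "i \<in> {Suc a..<a+b}" for i
      using y that by (intro sorted_nth_mono) auto
    then show ?thesis
      using sum_bounded_above[of "{Suc a..<a+b}" "\<lambda>i. y ! i"] by simp
  qed
  finally have "sum_list y \<le> real a * y ! (a - 1) + y ! a + real (b - 1) * y ! (a + b - 1)"
    by simp
  moreover have "real b * y ! (a + b - 1) < sum_list y"
    using assms(1,4) by (auto simp: A_set_def)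
  ultimately show ?thesis
    using assms(3) by (simp add: algebra_simps)
qed

lemma funpow_T_in_Lambda:
  "x \<in> Lambda (a + b) \<Longrightarrow> a \<ge> 1 \<Longrightarrow> (T a b ^^ k) x \<in> Lambda (a + b)"
  by (induction k) (simp_all add: T_in_Lambda)

lemma funpow_T_rat_lin_indep:
  assumes "rat_lin_indep x" "x \<in> Lambda (a + b)" "a \<ge> 1"
  shows "rat_lin_indep ((T a b ^^ k) x)"
proof (induction k)
  case (Suc k)
  then show ?case
    using funpow_T_in_Lambda[OF assms(2,3), of k] rat_lin_indep_T[OF Suc.IH _ assms(3)]
    by (simp add: Lambda_iff)
qed (simp add: assms(1))

lemma funpow_T_pivot_pos:
  assumes "rat_lin_indep x" "x \<in> Lambda (a + b)" "a \<ge> 1"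
  shows "0 < (T a b ^^ k) x ! (a - 1)"
proof -
  have y: "(T a b ^^ k) x \<in> Lambda (a + b)"
    using assms(2,3) by (rule funpow_T_in_Lambda)
  then have "0 \<le> (T a b ^^ k) x ! (a - 1)"
    using assms(3) by (simp add: Lambda_iff)
  moreover have "(T a b ^^ k) x ! (a - 1) \<noteq> 0"
    using funpow_T_rat_lin_indep[OF assms] y assms(3)
    by (intro rat_lin_indep_nth_nonzero) (auto simp: Lambda_iff)
  ultimately show ?thesis
    by simp
qed

lemma funpow_T_pivot_tendsto_zero:
  assumes "x \<in> Lambda (a + b)" "a \<ge> 1" "b \<ge> 1"
  shows "(\<lambda>k. (T a b ^^ k) x ! (a - 1)) \<longlonglongrightarrow> 0"
proof -
  define v where "v k = (T a b ^^ k) x ! (a - 1)" for k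
  define S where "S k = sum_list ((T a b ^^ k) x)" for k
  have y: "(T a b ^^ k) x \<in> Lambda (a + b)" for k
    using assms(1,2) by (rule funpow_T_in_Lambda)
  have v_nonneg: "0 \<le> v k" for k
    using y[of k] assms(2) by (simp add: v_def Lambda_iff)
  have S_nonneg: "0 \<le> S k" for k
    using y[of k] by (auto simp: S_def Lambda_iff sum_list_sum_nth intro!: sum_nonneg)
  have "S (Suc k) = S k - real b * v k" for k
    using y[of k] by (simp add: S_def v_def sum_list_T Lambda_iff)
  then have telescope: "S 0 - S n = real b * (\<Sum>i<n. v i)" for n
    by (induction n) (simp_all add: distrib_left)
  have "(\<Sum>i<n. v i) \<le> S 0" for n
  proof -
    have "(\<Sum>i<n. v i) \<le> real b * (\<Sum>i<n. v i)"
      using assms(3) mult_right_mono[of 1 "real b" "\<Sum>i<n. v i"] v_nonneg by (simp add: sum_nonneg)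
    then show ?thesis
      using telescope[of n] S_nonneg[of n] by linarith
  qed
  then have "summable v"
    using v_nonneg by (intro summableI_nonneg_bounded)
  then show ?thesis
    unfolding v_def by (rule summable_LIMSEQ_zero)
qed

lemma funpow_T_last_bounded_below:
  assumes "x \<in> Lambda (a + b)" "a \<ge> 1"
    and "\<not> (\<forall>i < a + b. (\<lambda>k. ((T a b ^^ k) x) ! i) \<longlonglongrightarrow> 0)"
  obtains e where "e > 0" "\<And>k. e \<le> (T a b ^^ k) x ! (a + b - 1)"
proof -
  define M where "M k = (T a b ^^ k) x ! (a + b - 1)" for k
  have y: "(T a b ^^ k) x \<in> Lambda (a + b)" for k
    using assms(1,2) by (rule funpow_T_in_Lambda)
  have M_nonneg: "0 \<le> M k" for k
    using y[of k] assms(2) by (simp add: M_def Lambda_iff)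
  have "decseq M"
    unfolding decseq_Suc_iff M_def using T_last_le[OF y assms(2)] by simp
  then obtain L where L: "M \<longlonglongrightarrow> L" "\<forall>k. L \<le> M k"
    by (rule decseq_convergent) (use M_nonneg in blast)
  have "L \<noteq> 0"
  proof
    assume "L = 0"
    have "(\<lambda>k. (T a b ^^ k) x ! i) \<longlonglongrightarrow> 0" if "i < a + b" for i
    proof (rule tendsto_sandwich[of "\<lambda>_. 0" _ _ M])
      show "\<forall>\<^sub>F k in sequentially. 0 \<le> (T a b ^^ k) x ! i"
        by (intro always_eventually allI) (use y that in \<open>simp add: Lambda_iff\<close>)
      show "\<forall>\<^sub>F k in sequentially. (T a b ^^ k) x ! i \<le> M k"
        by (intro always_eventually allI) (use y that in \<open>simp add: M_def Lambda_iff sorted_nth_mono\<close>)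
    qed (use L \<open>L = 0\<close> in simp_all)
    with assms(3) show False
      by blast
  qed
  moreover have "0 \<le> L"
    using L(1) by (rule LIMSEQ_le_const) (use M_nonneg in blast)
  ultimately show ?thesis
    using that[of L] L(2) by (simp add: M_def)
qed

lemma funpow_T_pivot_eventually_fixed:
  assumes "x \<in> Lambda (a + b)" "a \<ge> 1" "b \<ge> 1"
    and avoid: "\<And>k. k \<ge> 1 \<Longrightarrow> (T a b ^^ k) x \<notin> A_set a b"
    and "e > 0" and last_ge: "\<And>k. e \<le> (T a b ^^ k) x ! (a + b - 1)"
  obtains K where "\<And>k. k \<ge> K \<Longrightarrow> (T a b ^^ Suc k) x ! (a - 1) = (T a b ^^ k) x ! (a - 1)"
proof -
  define y where "y k = (T a b ^^ k) x" for k
  have y: "y k \<in> Lambda (a + b)" for k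
    unfolding y_def using assms(1,2) by (rule funpow_T_in_Lambda)
  have "e / (a + 2) > 0"
    using \<open>e > 0\<close> by simp
  with funpow_T_pivot_tendsto_zero[OF assms(1-3)] obtain K
    where small: "\<And>k. k \<ge> K \<Longrightarrow> y k ! (a - 1) < e / (a + 2)"
    unfolding y_def by (metis (no_types, lifting) LIMSEQ_D real_norm_def abs_less_iff diff_zero)
  have "T a b (y k) ! (a - 1) = y k ! (a - 1)" if "k \<ge> Suc K" for k
  proof -
    have "y k ! (a + b - 1) - y k ! a < real a * y k ! (a - 1)"
      using gap_lt_if_not_in_A_set[OF y assms(2,3)] avoid that by (simp add: y_def)
    moreover have "(a + 2) * y k ! (a - 1) < e"
      using small[of k] that by (simp add: field_simps)
    ultimately have "2 * y k ! (a - 1) \<le> y k ! a"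
      using last_ge[of k] by (simp add: y_def algebra_simps)
    then have "T a b (y k) = T_unsorted a b (y k)"
      by (rule T_eq_T_unsorted_if_gap[OF y assms(2)])
    then show ?thesis
      using y[of k] assms(2) by (simp add: nth_T_unsorted Lambda_iff)
  qed
  then show ?thesis
    using that[of "Suc K"] by (simp add: y_def)
qed

theorem proposition4p6:
  fixes a b :: nat and x :: "real list"
  assumes "a \<ge> 1" and "b \<ge> 2"
    and "x \<in> Lambda (a + b)"
    and "rat_lin_indep x"
    and "\<not> (\<forall>i < a + b. (\<lambda>k. ((T a b ^^ k) x) ! i) \<longlonglongrightarrow> 0)"
  shows "\<exists>k \<ge> 1. (T a b ^^ k) x \<in> A_set a b"
proof (rule ccontr)
  assume "\<not> ?thesis"
  then have avoid: "\<And>k. k \<ge> 1 \<Longrightarrow> (T a b ^^ k) x \<notin> A_set a b"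
    by blast
  have "b \<ge> 1" \<comment> \<open>this is all that is needed of \<open>b \<ge> 2\<close>\<close>
    using assms(2) by simp
  define v where "v k = (T a b ^^ k) x ! (a - 1)" for k
  obtain e where "e > 0" "\<And>k. e \<le> (T a b ^^ k) x ! (a + b - 1)"
    using funpow_T_last_bounded_below[OF assms(3,1,5)] by blast
  then obtain K where fixed: "\<And>k. k \<ge> K \<Longrightarrow> v (Suc k) = v k"
    using funpow_T_pivot_eventually_fixed[OF assms(3,1) \<open>b \<ge> 1\<close> avoid] unfolding v_def by blast
  have "v (k + K) = v K" for k
    by (induction k) (simp_all add: fixed)
  moreover have "(\<lambda>k. v (k + K)) \<longlonglongrightarrow> 0"
    using funpow_T_pivot_tendsto_zero[OF assms(3,1) \<open>b \<ge> 1\<close>] unfolding v_def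
    by (rule LIMSEQ_ignore_initial_segment)
  ultimately have "v K = 0"
    by (simp add: LIMSEQ_const_iff)
  with funpow_T_pivot_pos[OF assms(4,3,1), of K] show False
    by (simp add: v_def)
qed

end
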